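(* For every integer $n \ge 0$, define $\xi : \mathrm{SYT}(\theta^{(n)}) \to \mathcal{P}_n$ as follows. For $T \in \mathrm{SYT}(\theta^{(n)})$, let $H$ be the entry of $T$ in the heart, and let $\xi(T) = p_1 p_2 \cdots p_{2n+2}$, where for each $1 \le i \le 2n+2$: \[ p_i = \begin{cases} \mathsf{E}, & \text{if } i+1 \in \mathrm{arm}(T) \text{ and } i+2 < H;\\ \mathsf{N}, & \text{if } i+1 \in \mathrm{leg}(T) \text{ and } i+2 < H;\\ \mathsf{S}, & \text{if } i+1 \in \mathrm{arm}(T) \text{ and } i+2 = H;\\ \mathsf{W}, & \text{if } i+1 \in \mathrm{leg}(T) \text{ and } i+2 = H;\\ \mathsf{E}, & \text{if } i+2 \in \mathrm{arm}(T) \text{ and } H < i+2;\\ \mathsf{N}, & \text{if } i+2 \in \mathrm{leg}(T) \text{ and } H < i+2. \end{cases} \] Then $\xi(T)$ lies in $\mathcal{P}_n$ for every $T$, and $\xi$ is a bijection.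
   Context: For $n \ge 0$, $\theta^{(n)}$ denotes the integer partition $(n+2, 2, 1^n)$ of $2n+4$ (rows of lengths $n+2$, $2$, and then $n$ rows of length $1$), identified with its Young diagram in English convention (the row of length $n+2$ on top). The \emph{arm} of $\theta^{(n)}$ is its first row (all $n+2$ boxes, including the top-left corner box), the \emph{leg} is its first column (all $n+2$ boxes, including the top-left corner box), and the \emph{heart} is the unique box lying in neither the first row nor the first column (the second box of the second row). $\mathrm{SYT}(\theta^{(n)})$ is the set of standard Young tableaux of shape $\theta^{(n)}$: bijective fillings of the boxes with $1, \dots, 2n+4$ increasing left to right along rows and top to bottom down columns. For a tableau $T$, $\mathrm{arm}(T)$, $\mathrm{leg}(T)$, $\mathrm{heart}(T)$ denote the sets of entries of $T$ in the arm, leg, and heart respectively; "$k \in \mathrm{arm}(T)$" means the entry $k$ lies in the arm. $\mathcal{P}_n$ is the set of lattice paths in $\mathbb{Z}^2$ from $(0,0)$ to $(n,n)$ of exactly $2n+2$ steps, each step one of $\mathsf{N} = (0,1)$, $\mathsf{S} = (0,-1)$, $\mathsf{E} = (1,0)$, $\mathsf{W} = (-1,0)$, such that every vertex of the path lies in the closed first quadrant $\{(x,y) : x \ge 0, y \ge 0\}$. Such a path is identified with its word $p_1 p_2 \cdots p_{2n+2}$ of steps in the alphabet $\{\mathsf{N},\mathsf{S},\mathsf{E},\mathsf{W}\}$. *)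

theory Defs
  imports Main
begin

text \<open>Cells are (row, column), 0-indexed, English convention (row 0 on top).\<close>

definition theta_shape :: "nat \<Rightarrow> (nat \<times> nat) set" where
  "theta_shape n = {(0, c) | c. c < n + 2} \<union> {(1, c) | c. c < 2} \<union> {(r, 0) | r. 2 \<le> r \<and> r < n + 2}"

definition arm_cells :: "nat \<Rightarrow> (nat \<times> nat) set" where
  "arm_cells n = {(0, c) | c. c < n + 2}"

definition leg_cells :: "nat \<Rightarrow> (nat \<times> nat) set" where
  "leg_cells n = {(r, 0) | r. r < n + 2}"

definition heart_cell :: "nat \<times> nat" where
  "heart_cell = (1, 1)"

definition SYT :: "nat \<Rightarrow> ((nat \<times> nat) \<Rightarrow> nat) set" where
  "SYT n = {T. bij_betw T (theta_shape n) {1..2*n+4}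
              \<and> (\<forall>x. x \<notin> theta_shape n \<longrightarrow> T x = 0)
              \<and> (\<forall>r c. (r, c) \<in> theta_shape n \<and> (r, Suc c) \<in> theta_shape n \<longrightarrow> T (r, c) < T (r, Suc c))
              \<and> (\<forall>r c. (r, c) \<in> theta_shape n \<and> (Suc r, c) \<in> theta_shape n \<longrightarrow> T (r, c) < T (Suc r, c))}"

definition in_arm :: "nat \<Rightarrow> ((nat \<times> nat) \<Rightarrow> nat) \<Rightarrow> nat \<Rightarrow> bool" where
  "in_arm n T k \<longleftrightarrow> k \<in> T ` arm_cells n"

definition in_leg :: "nat \<Rightarrow> ((nat \<times> nat) \<Rightarrow> nat) \<Rightarrow> nat \<Rightarrow> bool" where
  "in_leg n T k \<longleftrightarrow> k \<in> T ` leg_cells n"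

datatype step = N | S | E | W

fun step_vec :: "step \<Rightarrow> int \<times> int" where
  "step_vec N = (0, 1)"
| "step_vec S = (0, -1)"
| "step_vec E = (1, 0)"
| "step_vec W = (-1, 0)"

definition endpoint :: "step list \<Rightarrow> int \<times> int" where
  "endpoint ps = (sum_list (map (fst \<circ> step_vec) ps), sum_list (map (snd \<circ> step_vec) ps))"

definition paths :: "nat \<Rightarrow> step list set" where
  "paths n = {ps. length ps = 2*n+2
                \<and> (\<forall>k \<le> length ps. fst (endpoint (take k ps)) \<ge> 0 \<and> snd (endpoint (take k ps)) \<ge> 0)
                \<and> endpoint ps = (int n, int n)}"

text \<open>The i-th letter (1-indexed) of xi(T); H is the heart entry. The final default
  branch is never reached for standard Young tableaux.\<close>
definition xi_letter :: "nat \<Rightarrow> ((nat \<times> nat) \<Rightarrow> nat) \<Rightarrow> nat \<Rightarrow> step" where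
  "xi_letter n T i = (let H = T heart_cell in
     if in_arm n T (i+1) \<and> i+2 < H then E
     else if in_leg n T (i+1) \<and> i+2 < H then N
     else if in_arm n T (i+1) \<and> i+2 = H then S
     else if in_leg n T (i+1) \<and> i+2 = H then W
     else if in_arm n T (i+2) \<and> H < i+2 then E
     else if in_leg n T (i+2) \<and> H < i+2 then N
     else undefined)"

definition xi :: "nat \<Rightarrow> ((nat \<times> nat) \<Rightarrow> nat) \<Rightarrow> step list" where
  "xi n T = map (xi_letter n T) [1..<2*n+3]"

end

theory Submission
  imports Defs
begin

text \<open>A standard tableau T of shape theta^(n) is determined by its arm set A and its heart
  entry H: the leg holds 1 together with the entries outside A and different from H, and both
  arm and leg are filled increasingly. Such a filling is standard exactly when the second arm
  entry and the second leg entry are smaller than H. The word xi(T) reads the entries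
  2, ..., 2n+4 other than H in increasing order, writing E for an arm entry and N for a leg
  entry, except that the entry H - 1 is written S or W. The single S or W step comes after the
  step of the second leg or arm entry, which is what keeps the path in the quadrant.
  Conversely, a path in P_n with 2n+2 steps ending at (n,n) has exactly one S or W step, whose
  position fixes H, while the positions of its E and S steps fix A.\<close>

lemma sorted_list_of_set_image_upt:
  fixes f :: "nat \<Rightarrow> 'a::linorder"
  assumes "\<And>i. Suc i < m \<Longrightarrow> f i < f (Suc i)"
  shows "sorted_list_of_set (f ` {..<m}) = map f [0..<m]"
proof -
  have "sorted_wrt (<) (map f [0..<m])"
    using assms by (subst sorted_wrt_iff_nth_Suc_transp) (auto simp: transp_def)
  then show ?thesis
    using distinct_card[of "map f [0..<m]"]
    by (subst sorted_list_of_set_unique[symmetric]) (auto simp: strict_sorted_iff atLeast0LessThan)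
qed

lemma nth_0_sorted_list_of_set:
  "finite X \<Longrightarrow> X \<noteq> {} \<Longrightarrow> sorted_list_of_set X ! 0 = Min X"
  by (simp add: sorted_list_of_set_nonempty)

lemma nth_1_sorted_list_of_set_le:
  assumes "finite X" "x \<in> X" "x \<noteq> Min X"
  shows "sorted_list_of_set X ! 1 \<le> x"
proof -
  have "x \<in> X - {Min X}"
    using assms by simp
  have "sorted_list_of_set X ! 1 = sorted_list_of_set (X - {Min X}) ! 0"
    using assms(1,2) by (subst sorted_list_of_set_nonempty) auto
  also have "\<dots> = Min (X - {Min X})"
    using \<open>x \<in> X - {Min X}\<close> assms(1) by (intro nth_0_sorted_list_of_set) auto
  also have "\<dots> \<le> x"
    using \<open>x \<in> X - {Min X}\<close> assms(1) by simp
  finally show ?thesis .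
qed

lemma Min_eq_1: "finite X \<Longrightarrow> 1 \<in> X \<Longrightarrow> 0 \<notin> X \<Longrightarrow> Min X = (1::nat)"
  by (metis Min_eqI less_one not_le)

section \<open>Tableaux of shape theta^(n) and their arm and heart\<close>

lemma theta_shape_iff:
  "(r, c) \<in> theta_shape n \<longleftrightarrow> r = 0 \<and> c < n + 2 \<or> c = 0 \<and> r < n + 2 \<or> r = 1 \<and> c = 1"
  by (auto simp: theta_shape_def)

lemma theta_shape_eq: "theta_shape n = arm_cells n \<union> leg_cells n \<union> {heart_cell}"
  by (auto simp: theta_shape_def arm_cells_def leg_cells_def heart_cell_def)

lemma arm_cells_eq: "arm_cells n = (\<lambda>c. (0, c)) ` {..<n + 2}"
  by (auto simp: arm_cells_def)

lemma leg_cells_eq: "leg_cells n = (\<lambda>r. (r, 0)) ` {..<n + 2}"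
  by (auto simp: leg_cells_def)

lemma card_arm_cells: "card (arm_cells n) = n + 2"
  by (simp add: arm_cells_eq card_image inj_on_def)

lemma card_leg_cells: "card (leg_cells n) = n + 2"
  by (simp add: leg_cells_eq card_image inj_on_def)

lemma arm_cells_Int_leg_cells: "arm_cells n \<inter> leg_cells n = {(0, 0)}"
  by (auto simp: arm_cells_def leg_cells_def)

lemma card_theta_shape: "card (theta_shape n) = 2 * n + 4"
proof -
  have fin: "finite (arm_cells n)" "finite (leg_cells n)"
    by (simp_all add: arm_cells_eq leg_cells_eq)
  have "card (arm_cells n \<union> leg_cells n) = 2 * n + 3"
    using card_Un_Int[OF fin] by (simp add: card_arm_cells card_leg_cells arm_cells_Int_leg_cells)
  moreover have "heart_cell \<notin> arm_cells n \<union> leg_cells n"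
    by (auto simp: heart_cell_def arm_cells_def leg_cells_def)
  ultimately show ?thesis
    using fin by (simp add: theta_shape_eq)
qed

lemma arm_cells_subset: "arm_cells n \<subseteq> theta_shape n"
  and leg_cells_subset: "leg_cells n \<subseteq> theta_shape n"
  and heart_cell_in_theta_shape: "heart_cell \<in> theta_shape n"
  by (auto simp: theta_shape_eq)

lemma SYT_outside: "T \<in> SYT n \<Longrightarrow> x \<notin> theta_shape n \<Longrightarrow> T x = 0"
  unfolding SYT_def by (metis (mono_tags, lifting) mem_Collect_eq)

lemma
  assumes "T \<in> SYT n"
  shows SYT_inj_on: "inj_on T (theta_shape n)"
    and SYT_image: "T ` theta_shape n = {1..2 * n + 4}"
    and SYT_row_less: "(r, c) \<in> theta_shape n \<Longrightarrow> (r, Suc c) \<in> theta_shape n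
      \<Longrightarrow> T (r, c) < T (r, Suc c)"
    and SYT_col_less: "(r, c) \<in> theta_shape n \<Longrightarrow> (Suc r, c) \<in> theta_shape n
      \<Longrightarrow> T (r, c) < T (Suc r, c)"
  using assms by (simp_all add: SYT_def bij_betw_def)

lemma SYT_corner:
  assumes T: "T \<in> SYT n"
  shows "T (0, 0) = 1"
proof -
  have smaller_neighbour: "\<exists>q \<in> theta_shape n. T q < T (r, c)"
    if rc: "(r, c) \<in> theta_shape n" "(r, c) \<noteq> (0, 0)" for r c
  proof -
    consider c' where "r = 0" "c = Suc c'" | r' where "c = 0" "r = Suc r'" | "r = 1" "c = 1"
      using rc by (cases r; cases c) (auto simp: theta_shape_iff)
    then show ?thesis
    proof cases
      case (1 c')
      then show ?thesis
        using SYT_row_less[OF T, of 0 c'] rc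
        by (intro bexI[of _ "(0, c')"]) (auto simp: theta_shape_iff)
    next
      case (2 r')
      then show ?thesis
        using SYT_col_less[OF T, of r' 0] rc
        by (intro bexI[of _ "(r', 0)"]) (auto simp: theta_shape_iff)
    next
      case 3
      then show ?thesis
        using SYT_col_less[OF T, of 0 1] by (intro bexI[of _ "(0, 1)"]) (auto simp: theta_shape_iff)
    qed
  qed
  have entries_pos: "1 \<le> T q" if "q \<in> theta_shape n" for q
    using SYT_image[OF T] that by fastforce
  have "1 \<in> T ` theta_shape n"
    using SYT_image[OF T] by simp
  then obtain p where p: "p \<in> theta_shape n" "T p = 1"
    by (metis imageE)
  have "p = (0, 0)"
  proof (rule ccontr)
    assume "p \<noteq> (0, 0)"
    then obtain q where "q \<in> theta_shape n" "T q < 1"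
      using smaller_neighbour[of "fst p" "snd p"] p by auto
    then show False
      using entries_pos by fastforce
  qed
  with p show ?thesis by simp
qed

lemma SYT_arm_Int_leg:
  assumes T: "T \<in> SYT n"
  shows "T ` arm_cells n \<inter> T ` leg_cells n = {1}"
proof -
  have "T ` arm_cells n \<inter> T ` leg_cells n = T ` (arm_cells n \<inter> leg_cells n)"
    using SYT_inj_on[OF T] by (intro inj_on_image_Int[symmetric]) (auto simp: theta_shape_eq)
  then show ?thesis
    by (simp add: arm_cells_Int_leg_cells SYT_corner[OF T])
qed

lemma
  assumes T: "T \<in> SYT n"
  shows SYT_heart_notin_arm: "T heart_cell \<notin> T ` arm_cells n"
    and SYT_heart_notin_leg: "T heart_cell \<notin> T ` leg_cells n"
proof -
  have "heart_cell \<notin> arm_cells n" "heart_cell \<notin> leg_cells n"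
    by (auto simp: heart_cell_def arm_cells_def leg_cells_def)
  then show "T heart_cell \<notin> T ` arm_cells n" "T heart_cell \<notin> T ` leg_cells n"
    using inj_on_image_mem_iff[OF SYT_inj_on[OF T] heart_cell_in_theta_shape]
      arm_cells_subset leg_cells_subset by simp_all
qed

definition leg_entries :: "nat \<Rightarrow> nat set \<Rightarrow> nat \<Rightarrow> nat set" where
  "leg_entries n A H = insert 1 ({1..2 * n + 4} - A - {H})"

lemma SYT_leg_image:
  assumes T: "T \<in> SYT n"
  shows "T ` leg_cells n = leg_entries n (T ` arm_cells n) (T heart_cell)"
  using SYT_image[OF T] SYT_arm_Int_leg[OF T] SYT_heart_notin_leg[OF T]
  unfolding leg_entries_def theta_shape_eq image_Un by blast

text \<open>The last two conjuncts say that the second smallest arm entry and the second smallest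
  leg entry are smaller than H.\<close>

definition admissible :: "nat \<Rightarrow> nat set \<Rightarrow> nat \<Rightarrow> bool" where
  "admissible n A H \<longleftrightarrow>
     A \<subseteq> {1..2 * n + 4} \<and> card A = n + 2 \<and> 1 \<in> A \<and> H \<notin> A \<and> H \<le> 2 * n + 4
     \<and> (\<exists>a \<in> A. 2 \<le> a \<and> a < H) \<and> (\<exists>b. b \<notin> A \<and> 2 \<le> b \<and> b < H)"

lemma admissible_heart_ge: "admissible n A H \<Longrightarrow> 3 \<le> H"
  by (auto simp: admissible_def)

lemma admissible_SYT:
  assumes T: "T \<in> SYT n"
  shows "admissible n (T ` arm_cells n) (T heart_cell)"
proof -
  have cells: "(0, 0) \<in> theta_shape n" "(0, 1) \<in> theta_shape n" "(1, 0) \<in> theta_shape n"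
    "(1, 1) \<in> theta_shape n"
    by (simp_all add: theta_shape_iff)
  have arm2: "T (0, 1) \<in> T ` arm_cells n" "2 \<le> T (0, 1)" "T (0, 1) < T heart_cell"
    using SYT_row_less[OF T, of 0 0] SYT_col_less[OF T, of 0 1] cells SYT_corner[OF T]
    by (auto simp: arm_cells_def heart_cell_def)
  have leg2: "T (1, 0) \<in> T ` leg_cells n" "2 \<le> T (1, 0)" "T (1, 0) < T heart_cell"
    using SYT_col_less[OF T, of 0 0] SYT_row_less[OF T, of 1 0] cells SYT_corner[OF T]
    by (auto simp: leg_cells_def heart_cell_def)
  have "T (1, 0) \<notin> T ` arm_cells n"
  proof
    assume "T (1, 0) \<in> T ` arm_cells n"
    then have "T (1, 0) \<in> {1}"
      using SYT_arm_Int_leg[OF T] leg2(1) by blast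
    with leg2(2) show False
      by simp
  qed
  moreover have "card (T ` arm_cells n) = n + 2"
    using inj_on_subset[OF SYT_inj_on[OF T] arm_cells_subset] by (simp add: card_image card_arm_cells)
  moreover have "T ` arm_cells n \<subseteq> {1..2 * n + 4}" "T heart_cell \<le> 2 * n + 4"
    using SYT_image[OF T] by (auto simp: theta_shape_eq)
  moreover have "1 \<in> T ` arm_cells n"
    using SYT_arm_Int_leg[OF T] by auto
  ultimately show ?thesis
    unfolding admissible_def using arm2 leg2 SYT_heart_notin_arm[OF T]
    by (intro conjI bexI[of _ "T (0, 1)"] exI[of _ "T (1, 0)"]) simp_all
qed

lemma
  assumes "admissible n A H"
  shows admissible_finite: "finite A"
    and card_leg_entries: "card (leg_entries n A H) = n + 2"
    and arm_leg_heart_entries: "A \<union> leg_entries n A H \<union> {H} = {1..2 * n + 4}"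
proof -
  have A: "A \<subseteq> {1..2 * n + 4}" "card A = n + 2" "1 \<in> A" "H \<notin> A"
    "3 \<le> H" "H \<le> 2 * n + 4"
    using assms admissible_heart_ge[OF assms] by (auto simp: admissible_def)
  then show "finite A"
    using finite_subset by blast
  have "card ({1..2 * n + 4} - insert H A) = n + 1"
    using A \<open>finite A\<close> by (subst card_Diff_subset) auto
  moreover have "leg_entries n A H = insert 1 ({1..2 * n + 4} - insert H A)"
    by (auto simp: leg_entries_def)
  ultimately show "card (leg_entries n A H) = n + 2"
    using A by simp
  show "A \<union> leg_entries n A H \<union> {H} = {1..2 * n + 4}"
    using A by (auto simp: leg_entries_def)
qed

lemma admissible_sorted_entries:
  assumes adm: "admissible n A H"
  defines "L \<equiv> leg_entries n A H"
  shows "length (sorted_list_of_set A) = n + 2" "length (sorted_list_of_set L) = n + 2"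
    and "sorted_list_of_set A ! 0 = 1" "sorted_list_of_set L ! 0 = 1"
    and "sorted_list_of_set A ! 1 < H" "sorted_list_of_set L ! 1 < H"
proof -
  obtain a b where a: "a \<in> A" "2 \<le> a" "a < H" and b: "b \<notin> A" "2 \<le> b" "b < H"
    using adm by (auto simp: admissible_def)
  have A: "A \<subseteq> {1..2 * n + 4}" "1 \<in> A" "card A = n + 2" "H \<le> 2 * n + 4"
    using adm by (auto simp: admissible_def)
  have L: "finite L" "1 \<in> L" "0 \<notin> L" "b \<in> L"
    using b A(4) by (auto simp: L_def leg_entries_def)
  have minA: "Min A = 1"
    using A admissible_finite[OF adm] by (intro Min_eq_1) auto
  have minL: "Min L = 1"
    using L by (intro Min_eq_1) auto
  show "length (sorted_list_of_set A) = n + 2" "length (sorted_list_of_set L) = n + 2"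
    using A card_leg_entries[OF adm] by (simp_all add: L_def)
  show "sorted_list_of_set A ! 0 = 1"
    using nth_0_sorted_list_of_set[OF admissible_finite[OF adm]] A(2) minA by auto
  show "sorted_list_of_set L ! 0 = 1"
    using nth_0_sorted_list_of_set[OF L(1)] L(2) minL by auto
  show "sorted_list_of_set A ! 1 < H"
    using nth_1_sorted_list_of_set_le[OF admissible_finite[OF adm] a(1)] a minA by simp
  show "sorted_list_of_set L ! 1 < H"
    using nth_1_sorted_list_of_set_le[OF L(1) L(4)] b minL by simp
qed

definition theta_tableau :: "nat \<Rightarrow> nat set \<Rightarrow> nat \<Rightarrow> nat \<times> nat \<Rightarrow> nat" where
  "theta_tableau n A H = (\<lambda>(r, c).
     if r = 0 \<and> c < n + 2 then sorted_list_of_set A ! c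
     else if c = 0 \<and> r < n + 2 then sorted_list_of_set (leg_entries n A H) ! r
     else if (r, c) = heart_cell then H else 0)"

lemma SYT_eq_theta_tableau:
  assumes T: "T \<in> SYT n"
  shows "T = theta_tableau n (T ` arm_cells n) (T heart_cell)"
proof
  fix x :: "nat \<times> nat"
  obtain r c where x: "x = (r, c)"
    by fastforce
  have "sorted_list_of_set (T ` arm_cells n) = map (\<lambda>c. T (0, c)) [0..<n + 2]"
    unfolding arm_cells_eq image_image
    by (rule sorted_list_of_set_image_upt) (rule SYT_row_less[OF T]; simp add: theta_shape_iff)
  moreover have "sorted_list_of_set (T ` leg_cells n) = map (\<lambda>r. T (r, 0)) [0..<n + 2]"
    unfolding leg_cells_eq image_image
    by (rule sorted_list_of_set_image_upt) (rule SYT_col_less[OF T]; simp add: theta_shape_iff)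
  ultimately show "T x = theta_tableau n (T ` arm_cells n) (T heart_cell) x"
    using SYT_outside[OF T, of x] unfolding theta_tableau_def SYT_leg_image[OF T, symmetric]
    by (auto simp: x theta_shape_iff heart_cell_def simp del: upt_Suc)
qed

lemma
  assumes adm: "admissible n A H"
  shows theta_tableau_arm: "theta_tableau n A H ` arm_cells n = A"
    and theta_tableau_leg: "theta_tableau n A H ` leg_cells n = leg_entries n A H"
    and theta_tableau_heart: "theta_tableau n A H heart_cell = H"
proof -
  note sorted = admissible_sorted_entries[OF adm]
  have "theta_tableau n A H ` arm_cells n = (\<lambda>c. sorted_list_of_set A ! c) ` {..<n + 2}"
    by (simp add: arm_cells_eq image_image theta_tableau_def)
  also have "\<dots> = set (sorted_list_of_set A)"
    using sorted(1) by (auto simp: set_conv_nth)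
  finally show "theta_tableau n A H ` arm_cells n = A"
    using admissible_finite[OF adm] by simp
  have "theta_tableau n A H ` leg_cells n
      = (\<lambda>r. sorted_list_of_set (leg_entries n A H) ! r) ` {..<n + 2}"
    unfolding leg_cells_eq image_image using sorted(3,4)
    by (intro image_cong) (auto simp: theta_tableau_def)
  also have "\<dots> = set (sorted_list_of_set (leg_entries n A H))"
    using sorted(2) by (auto simp: set_conv_nth)
  finally show "theta_tableau n A H ` leg_cells n = leg_entries n A H"
    by (simp add: leg_entries_def del: sorted_list_of_set_insert_remove)
  show "theta_tableau n A H heart_cell = H"
    by (simp add: theta_tableau_def heart_cell_def)
qed

lemma theta_tableau_SYT:
  assumes adm: "admissible n A H"
  shows "theta_tableau n A H \<in> SYT n"
proof -
  define T where "T = theta_tableau n A H"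
  define la where "la = sorted_list_of_set A"
  define ll where "ll = sorted_list_of_set (leg_entries n A H)"
  have la: "length la = n + 2" "la ! 0 = 1" "la ! 1 < H"
    and ll: "length ll = n + 2" "ll ! 0 = 1" "ll ! 1 < H"
    using admissible_sorted_entries[OF adm] by (simp_all add: la_def ll_def)
  have strict: "sorted_wrt (<) la" "sorted_wrt (<) ll"
    by (simp_all add: la_def ll_def)
  have "ll ! 0 < ll ! 1"
    using sorted_wrt_nth_less[OF strict(2)] ll(1) by simp
  have T_eq: "T (r, c) = (if r = 0 \<and> c < n + 2 then la ! c
      else if c = 0 \<and> r < n + 2 then ll ! r else if r = 1 \<and> c = 1 then H else 0)" for r c
    by (simp add: T_def theta_tableau_def la_def ll_def heart_cell_def)
  have image: "T ` theta_shape n = {1..2 * n + 4}"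
    using arm_leg_heart_entries[OF adm] theta_tableau_arm[OF adm] theta_tableau_leg[OF adm]
      theta_tableau_heart[OF adm]
    by (simp add: T_def theta_shape_eq image_Un)
  have "inj_on T (theta_shape n)"
    by (rule eq_card_imp_inj_on) (simp_all add: image card_theta_shape card_ge_0_finite)
  moreover have zero: "T x = 0" if "x \<notin> theta_shape n" for x
    using that by (cases x) (auto simp: T_eq theta_shape_iff)
  moreover have rows: "T (r, c) < T (r, Suc c)"
    if rc: "(r, c) \<in> theta_shape n" "(r, Suc c) \<in> theta_shape n" for r c
  proof -
    consider "r = 0" "Suc c < n + 2" | "r = 1" "c = 0"
      using rc by (auto simp: theta_shape_iff)
    then show ?thesis
      by cases (use la ll strict(1) in \<open>auto simp: T_eq sorted_wrt_nth_less\<close>)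
  qed
  moreover have cols: "T (r, c) < T (Suc r, c)"
    if rc: "(r, c) \<in> theta_shape n" "(Suc r, c) \<in> theta_shape n" for r c
  proof -
    consider "c = 0" "Suc r < n + 2" | "r = 0" "c = 1"
      using rc by (auto simp: theta_shape_iff)
    then show ?thesis
      by cases
        (use la ll strict(2) \<open>ll ! 0 < ll ! 1\<close> in \<open>auto simp: T_eq sorted_wrt_nth_less\<close>)
  qed
  ultimately show ?thesis
    unfolding T_def[symmetric] SYT_def bij_betw_def mem_Collect_eq using image
    by (blast intro: zero rows cols)
qed

lemma bij_betw_arm_heart:
  "bij_betw (\<lambda>T. (T ` arm_cells n, T heart_cell)) (SYT n) {(A, H). admissible n A H}"
proof (rule bij_betw_imageI)
  show "inj_on (\<lambda>T. (T ` arm_cells n, T heart_cell)) (SYT n)"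
  proof (rule inj_onI)
    fix T T' assume "T \<in> SYT n" "T' \<in> SYT n"
      and eq: "(T ` arm_cells n, T heart_cell) = (T' ` arm_cells n, T' heart_cell)"
    have "T = theta_tableau n (T ` arm_cells n) (T heart_cell)"
      using SYT_eq_theta_tableau[OF \<open>T \<in> SYT n\<close>] .
    also have "\<dots> = theta_tableau n (T' ` arm_cells n) (T' heart_cell)"
      using eq by simp
    also have "\<dots> = T'"
      using SYT_eq_theta_tableau[OF \<open>T' \<in> SYT n\<close>] by simp
    finally show "T = T'" .
  qed
  show "(\<lambda>T. (T ` arm_cells n, T heart_cell)) ` SYT n = {(A, H). admissible n A H}"
  proof (intro equalityI subsetI)
    fix AH assume "AH \<in> {(A, H). admissible n A H}"
    then obtain A H where "AH = (A, H)" "admissible n A H"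
      by blast
    then show "AH \<in> (\<lambda>T. (T ` arm_cells n, T heart_cell)) ` SYT n"
      by (intro image_eqI[of _ _ "theta_tableau n A H"])
        (simp_all add: theta_tableau_SYT theta_tableau_arm theta_tableau_heart)
  qed (auto simp: admissible_SYT)
qed

section \<open>The word of an arm set and a heart entry\<close>

text \<open>Step i (counting from 0) of the word reads the entry step_entry H i; these are the
  entries 2, ..., 2n+4 other than H in increasing order.\<close>

definition step_entry :: "nat \<Rightarrow> nat \<Rightarrow> nat" where
  "step_entry H i = (if i + 3 \<le> H then i + 2 else i + 3)"

lemma inj_step_entry: "inj (step_entry H)"
  by (auto simp: inj_on_def step_entry_def split: if_splits)

lemma step_entry_ge: "2 \<le> step_entry H i"
  by (simp add: step_entry_def)

lemma step_entry_image:
  assumes "3 \<le> H" "H \<le> 2 * n + 4"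
  shows "step_entry H ` {..<2 * n + 2} = {2..2 * n + 4} - {H}"
proof (intro equalityI subsetI)
  fix k assume "k \<in> {2..2 * n + 4} - {H}"
  then have "k = step_entry H (if k < H then k - 2 else k - 3)"
    and "(if k < H then k - 2 else k - 3) < 2 * n + 2"
    using assms by (auto simp: step_entry_def)
  then show "k \<in> step_entry H ` {..<2 * n + 2}"
    by blast
qed (use assms in \<open>auto simp: step_entry_def\<close>)

definition path_letter :: "nat set \<Rightarrow> nat \<Rightarrow> nat \<Rightarrow> step" where
  "path_letter A H i = (if i + 3 = H then (if step_entry H i \<in> A then S else W)
     else if step_entry H i \<in> A then E else N)"

definition path_word :: "nat \<Rightarrow> nat set \<Rightarrow> nat \<Rightarrow> step list" where
  "path_word n A H = map (path_letter A H) [0..<2 * n + 2]"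

lemma xi_letter_eq_path_letter:
  assumes T: "T \<in> SYT n" and i: "i < 2 * n + 2"
  shows "xi_letter n T (Suc i) = path_letter (T ` arm_cells n) (T heart_cell) i"
proof -
  define A where "A = T ` arm_cells n"
  define H where "H = T heart_cell"
  define k where "k = step_entry H i"
  have adm: "admissible n A H"
    using admissible_SYT[OF T] by (simp add: A_def H_def)
  have "H \<le> 2 * n + 4"
    using adm by (simp add: admissible_def)
  then have "k \<in> {2..2 * n + 4} - {H}"
    using step_entry_image[OF admissible_heart_ge[OF adm]] i unfolding k_def by blast
  then have "k \<in> A \<union> T ` leg_cells n - {1}"
    using SYT_image[OF T] by (auto simp: theta_shape_eq A_def H_def)
  then have leg_k: "in_leg n T k \<longleftrightarrow> k \<notin> A"
    using SYT_arm_Int_leg[OF T] by (auto simp: in_leg_def A_def)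
  have arm: "in_arm n T j \<longleftrightarrow> j \<in> A" for j
    by (simp add: in_arm_def A_def)
  consider "i + 3 < H" "k = Suc i + 1" | "i + 3 = H" "k = Suc i + 1" | "H < i + 3" "k = Suc i + 2"
    unfolding k_def step_entry_def by (cases "i + 3 \<le> H") (auto simp: le_less)
  then show ?thesis
    by cases (use leg_k in \<open>auto simp: xi_letter_def path_letter_def arm
        H_def[symmetric] A_def[symmetric] k_def[symmetric]\<close>)
qed

lemma xi_eq_path_word:
  assumes "T \<in> SYT n"
  shows "xi n T = path_word n (T ` arm_cells n) (T heart_cell)"
proof -
  have "[1..<2 * n + 3] = map Suc [0..<2 * n + 2]"
    by (simp add: map_Suc_upt numeral_3_eq_3 del: upt_Suc)
  then have "xi n T = map (xi_letter n T \<circ> Suc) [0..<2 * n + 2]"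
    by (simp add: xi_def del: upt_Suc)
  then show ?thesis
    using xi_letter_eq_path_letter[OF assms] by (simp add: path_word_def del: upt_Suc)
qed

lemma endpoint_map_upt:
  "endpoint (map f [0..<k]) = (\<Sum>i<k. fst (step_vec (f i)), \<Sum>i<k. snd (step_vec (f i)))"
  by (simp add: endpoint_def sum_set_upt_conv_sum_list_nat[symmetric] atLeast0LessThan)

lemma endpoint_count_list:
  "endpoint xs = (int (count_list xs E) - int (count_list xs W),
                  int (count_list xs N) - int (count_list xs S))"
proof (induction xs)
  case (Cons x xs)
  then show ?case
    by (cases x) (auto simp: endpoint_def)
qed (simp add: endpoint_def)

lemma length_eq_count_list:
  "length xs = count_list xs E + count_list xs W + count_list xs N + count_list xs S"
proof (induction xs)
  case (Cons x xs)
  then show ?case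
    by (cases x) auto
qed simp

lemma length_filter_eq_or_eq:
  "x \<noteq> y \<Longrightarrow> length (filter (\<lambda>s. s = x \<or> s = y) xs) = count_list xs x + count_list xs y"
  by (induction xs) auto

lemma N_mem_if_S_mem:
  assumes "0 \<le> snd (endpoint xs)" "S \<in> set xs"
  shows "N \<in> set xs"
proof -
  have "count_list xs S \<noteq> 0"
    using assms(2) by (simp add: count_list_0_iff)
  then have "count_list xs N \<noteq> 0"
    using assms(1) by (simp add: endpoint_count_list)
  then show ?thesis
    by (simp add: count_list_0_iff)
qed

lemma E_mem_if_W_mem:
  assumes "0 \<le> fst (endpoint xs)" "W \<in> set xs"
  shows "E \<in> set xs"
proof -
  have "count_list xs W \<noteq> 0"
    using assms(2) by (simp add: count_list_0_iff)
  then have "count_list xs E \<noteq> 0"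
    using assms(1) by (simp add: endpoint_count_list)
  then show ?thesis
    by (simp add: count_list_0_iff)
qed

lemma card_arm_steps:
  assumes adm: "admissible n A H"
  shows "card ({..<2 * n + 2} \<inter> {i. step_entry H i \<in> A}) = n + 1"
proof -
  have H: "3 \<le> H" "H \<le> 2 * n + 4"
    using adm admissible_heart_ge by (auto simp: admissible_def)
  have "step_entry H ` ({..<2 * n + 2} \<inter> {i. step_entry H i \<in> A}) = A - {1}"
  proof (intro equalityI subsetI)
    fix k assume "k \<in> A - {1}"
    then have "k \<in> step_entry H ` {..<2 * n + 2}"
      using step_entry_image[OF H] adm by (auto simp: admissible_def)
    with \<open>k \<in> A - {1}\<close>
    show "k \<in> step_entry H ` ({..<2 * n + 2} \<inter> {i. step_entry H i \<in> A})"
      by blast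
  qed (auto simp: step_entry_def)
  moreover have "card (A - {1}) = n + 1"
    using adm by (simp add: admissible_def)
  ultimately show ?thesis
    by (metis card_image inj_on_subset[OF inj_step_entry subset_UNIV])
qed

lemma endpoint_take_path_word:
  assumes "3 \<le> H" "k \<le> 2 * n + 2"
  shows "endpoint (take k (path_word n A H))
    = (int (card ({..<k} \<inter> {i. step_entry H i \<in> A})) - of_bool (H < k + 3),
       int (card ({..<k} \<inter> {i. step_entry H i \<notin> A})) - of_bool (H < k + 3))"
proof -
  have turn: "(\<Sum>i<k. of_bool (i + 3 = H) :: int) = of_bool (H < k + 3)"
  proof -
    have "(\<Sum>i<k. of_bool (i + 3 = H) :: int) = (\<Sum>i<k. if i = H - 3 then 1 else 0)"
      using assms(1) by (intro sum.cong) auto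
    then show ?thesis
      using assms(1) by (simp add: sum.delta) arith
  qed
  have "step_vec (path_letter A H i)
      = (of_bool (step_entry H i \<in> A) - of_bool (i + 3 = H),
         of_bool (step_entry H i \<notin> A) - of_bool (i + 3 = H))" for i
    by (simp add: path_letter_def)
  moreover have "take k (path_word n A H) = map (path_letter A H) [0..<k]"
    using assms(2) by (simp add: path_word_def take_map del: upt_Suc)
  ultimately show ?thesis
    using turn by (simp add: endpoint_map_upt sum_subtractf del: upt_Suc)
qed

lemma path_word_in_paths:
  assumes adm: "admissible n A H"
  shows "path_word n A H \<in> paths n"
proof -
  have H: "3 \<le> H" "H \<le> 2 * n + 4"
    using adm admissible_heart_ge by (auto simp: admissible_def)
  obtain a b where a: "a \<in> A" "2 \<le> a" "a < H" and b: "b \<notin> A" "2 \<le> b" "b < H"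
    using adm by (auto simp: admissible_def)
  define arms where "arms k = card ({..<k} \<inter> {i. step_entry H i \<in> A})" for k
  define legs where "legs k = card ({..<k} \<inter> {i. step_entry H i \<notin> A})" for k
  have prefix: "endpoint (take k (path_word n A H))
      = (int (arms k) - of_bool (H < k + 3), int (legs k) - of_bool (H < k + 3))"
    if "k \<le> 2 * n + 2" for k
    using endpoint_take_path_word[OF H(1) that] by (simp add: arms_def legs_def)
  txt \<open>The entries a and b are read before the turn at step H - 3.\<close>
  have "1 \<le> arms k" "1 \<le> legs k" if "H < k + 3" for k
  proof -
    have "step_entry H (a - 2) = a" "step_entry H (b - 2) = b"
      using a b by (auto simp: step_entry_def)
    then have "a - 2 \<in> {..<k} \<inter> {i. step_entry H i \<in> A}"
      "b - 2 \<in> {..<k} \<inter> {i. step_entry H i \<notin> A}"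
      using a b that by auto
    then show "1 \<le> arms k" "1 \<le> legs k"
      unfolding arms_def legs_def by (auto simp: Suc_le_eq card_gt_0_iff)
  qed
  then have "0 \<le> fst (endpoint (take k (path_word n A H)))
      \<and> 0 \<le> snd (endpoint (take k (path_word n A H)))"
    if "k \<le> 2 * n + 2" for k
    using prefix[OF that] by auto
  moreover have "arms (2 * n + 2) = n + 1" "legs (2 * n + 2) = n + 1"
  proof -
    show "arms (2 * n + 2) = n + 1"
      using card_arm_steps[OF adm] by (simp add: arms_def)
    have "{..<2 * n + 2} \<inter> {i. step_entry H i \<notin> A}
        = {..<2 * n + 2} - ({..<2 * n + 2} \<inter> {i. step_entry H i \<in> A})"
      by blast
    then show "legs (2 * n + 2) = n + 1"
      using card_arm_steps[OF adm] by (simp add: legs_def card_Diff_subset)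
  qed
  then have "endpoint (path_word n A H) = (int n, int n)"
    using prefix[of "2 * n + 2"] H by (simp add: path_word_def)
  ultimately show ?thesis
    by (simp add: paths_def path_word_def)
qed

lemma path_word_inj:
  assumes adm: "admissible n A H" and adm': "admissible n A' H'"
    and eq: "path_word n A H = path_word n A' H'"
  shows "A = A'" "H = H'"
proof -
  have H: "3 \<le> H" "H \<le> 2 * n + 4" and H': "3 \<le> H'"
    using adm adm' admissible_heart_ge by (auto simp: admissible_def)
  have A: "A \<subseteq> {1..2 * n + 4}" "1 \<in> A" "H \<notin> A"
    and A': "A' \<subseteq> {1..2 * n + 4}" "1 \<in> A'" "H' \<notin> A'"
    using adm adm' by (simp_all add: admissible_def)
  have letters: "path_letter A H i = path_letter A' H' i" if "i < 2 * n + 2" for i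
    using eq that by (simp add: path_word_def map_eq_conv del: upt_Suc)
  show "H = H'"
  proof (rule ccontr)
    assume "H \<noteq> H'"
    have "path_letter A H (H - 3) = path_letter A' H' (H - 3)"
      using H by (intro letters) arith
    with \<open>H \<noteq> H'\<close> show False
      using H by (auto simp: path_letter_def split: if_splits)
  qed
  have "k \<in> A \<longleftrightarrow> k \<in> A'" if "k \<in> {2..2 * n + 4} - {H}" for k
  proof -
    have "k \<in> step_entry H ` {..<2 * n + 2}"
      using that step_entry_image[OF H] by simp
    then obtain i where "i < 2 * n + 2" "k = step_entry H i"
      by auto
    then show ?thesis
      using letters[of i] \<open>H = H'\<close> by (simp add: path_letter_def split: if_splits)
  qed
  moreover have "k \<in> A \<longleftrightarrow> k \<in> A'" if "k \<notin> {2..2 * n + 4} - {H}" for k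
    using that A A' \<open>H = H'\<close> by (cases "k = 1") auto
  ultimately show "A = A'"
    by blast
qed

lemma paths_count_list:
  assumes "ps \<in> paths n"
  shows "count_list ps S + count_list ps W = 1" "count_list ps E + count_list ps S = n + 1"
proof -
  have "endpoint ps = (int n, int n)" "length ps = 2 * n + 2"
    using assms by (simp_all add: paths_def)
  then have "int (count_list ps E) - int (count_list ps W) = int n"
    "int (count_list ps N) - int (count_list ps S) = int n"
    "count_list ps E + count_list ps W + count_list ps N + count_list ps S = 2 * n + 2"
    by (simp_all add: endpoint_count_list length_eq_count_list[symmetric])
  then show "count_list ps S + count_list ps W = 1" "count_list ps E + count_list ps S = n + 1"
    by linarith+
qed

lemma paths_turn_preceded:
  assumes p: "ps \<in> paths n" and j: "j < length ps"
  shows "ps ! j = S \<Longrightarrow> \<exists>i<j. ps ! i = N" and "ps ! j = W \<Longrightarrow> \<exists>i<j. ps ! i = E"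
proof -
  have prefix: "take (Suc j) ps = take j ps @ [ps ! j]"
    using j by (rule take_Suc_conv_app_nth)
  have "0 \<le> fst (endpoint (take (Suc j) ps))" "0 \<le> snd (endpoint (take (Suc j) ps))"
    using p j by (simp_all add: paths_def)
  moreover have "x \<in> set (take j ps) \<Longrightarrow> \<exists>i<j. ps ! i = x" for x
    by (auto simp: in_set_conv_nth)
  ultimately show "ps ! j = S \<Longrightarrow> \<exists>i<j. ps ! i = N" "ps ! j = W \<Longrightarrow> \<exists>i<j. ps ! i = E"
    using N_mem_if_S_mem[of "take (Suc j) ps"] E_mem_if_W_mem[of "take (Suc j) ps"]
    unfolding prefix by auto
qed

lemma paths_turnE:
  assumes p: "ps \<in> paths n"
  obtains j where "j < 2 * n + 2" "ps ! j = S \<or> ps ! j = W"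
    and "\<And>i. i < 2 * n + 2 \<Longrightarrow> i \<noteq> j \<Longrightarrow> ps ! i = E \<or> ps ! i = N"
proof -
  have len: "length ps = 2 * n + 2"
    using p by (simp add: paths_def)
  have "card {i. i < length ps \<and> (ps ! i = S \<or> ps ! i = W)} = 1"
    using paths_count_list(1)[OF p] length_filter_eq_or_eq[of S W ps]
    by (simp add: length_filter_conv_card)
  then obtain j where j: "{i. i < length ps \<and> (ps ! i = S \<or> ps ! i = W)} = {j}"
    by (rule card_1_singletonE)
  show thesis
  proof
    show "j < 2 * n + 2" "ps ! j = S \<or> ps ! j = W"
      using j len by auto
    show "ps ! i = E \<or> ps ! i = N" if "i < 2 * n + 2" "i \<noteq> j" for i
      using that j len by (cases "ps ! i") auto
  qed
qed

definition path_arm :: "step list \<Rightarrow> nat \<Rightarrow> nat set" where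
  "path_arm ps H = insert 1 (step_entry H ` {i. i < length ps \<and> (ps ! i = E \<or> ps ! i = S)})"

lemma step_entry_in_path_arm_iff:
  "i < length ps \<Longrightarrow> step_entry H i \<in> path_arm ps H \<longleftrightarrow> ps ! i = E \<or> ps ! i = S"
  using step_entry_ge[of H i] inj_step_entry[of H] by (auto simp: path_arm_def inj_eq)

lemma admissible_path_arm:
  assumes p: "ps \<in> paths n" and j: "j < 2 * n + 2" "ps ! j = S \<or> ps ! j = W"
  defines "H \<equiv> j + 3"
  shows "admissible n (path_arm ps H) H"
proof -
  define A where "A = path_arm ps H"
  have len: "length ps = 2 * n + 2"
    using p by (simp add: paths_def)
  have A_iff: "step_entry H i \<in> A \<longleftrightarrow> ps ! i = E \<or> ps ! i = S" if "i < 2 * n + 2" for i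
    using step_entry_in_path_arm_iff[of i ps H] that len by (simp add: A_def)
  have entry_before: "i \<le> j \<Longrightarrow> step_entry H i = i + 2" for i
    by (simp add: step_entry_def H_def)
  have "card {i. i < length ps \<and> (ps ! i = E \<or> ps ! i = S)} = n + 1"
    using paths_count_list(2)[OF p] length_filter_eq_or_eq[of E S ps]
    by (simp add: length_filter_conv_card)
  moreover have "1 \<notin> step_entry H ` {i. i < length ps \<and> (ps ! i = E \<or> ps ! i = S)}"
    by (auto simp: step_entry_def)
  ultimately have "card A = n + 2"
    by (simp add: A_def path_arm_def card_image inj_on_subset[OF inj_step_entry])
  moreover have "A \<subseteq> {1..2 * n + 4}" "H \<notin> A" "H \<le> 2 * n + 4"
    using j len by (auto simp: A_def path_arm_def step_entry_def H_def)
  moreover have "\<exists>a\<in>A. 2 \<le> a \<and> a < H"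
  proof (cases "ps ! j = S")
    case True
    then show ?thesis
      using A_iff[OF j(1)] entry_before[of j] by (intro bexI[of _ "j + 2"]) (auto simp: H_def)
  next
    case False
    then obtain i where "i < j" "ps ! i = E"
      using paths_turn_preceded(2)[OF p] j len by auto
    then show ?thesis
      using A_iff[of i] entry_before[of i] j by (intro bexI[of _ "i + 2"]) (auto simp: H_def)
  qed
  moreover have "\<exists>b. b \<notin> A \<and> 2 \<le> b \<and> b < H"
  proof (cases "ps ! j = S")
    case True
    then obtain i where "i < j" "ps ! i = N"
      using paths_turn_preceded(1)[OF p] j len by auto
    then show ?thesis
      using A_iff[of i] entry_before[of i] j by (intro exI[of _ "i + 2"]) (auto simp: H_def)
  next
    case False
    then show ?thesis
      using A_iff[OF j(1)] entry_before[of j] j by (intro exI[of _ "j + 2"]) (auto simp: H_def)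
  qed
  moreover have "1 \<in> A"
    by (simp add: A_def path_arm_def)
  ultimately show ?thesis
    unfolding admissible_def A_def[symmetric] by blast
qed

lemma paths_eq_path_word:
  assumes p: "ps \<in> paths n"
  obtains A H where "admissible n A H" "ps = path_word n A H"
proof -
  have len: "length ps = 2 * n + 2"
    using p by (simp add: paths_def)
  obtain j where j: "j < 2 * n + 2" "ps ! j = S \<or> ps ! j = W"
    and others: "\<And>i. i < 2 * n + 2 \<Longrightarrow> i \<noteq> j \<Longrightarrow> ps ! i = E \<or> ps ! i = N"
    using paths_turnE[OF p] by blast
  have "ps = path_word n (path_arm ps (j + 3)) (j + 3)"
  proof (rule nth_equalityI)
    show "length ps = length (path_word n (path_arm ps (j + 3)) (j + 3))"
      using len by (simp add: path_word_def)
    show "ps ! i = path_word n (path_arm ps (j + 3)) (j + 3) ! i" if "i < length ps" for i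
      using that len j others[of i] step_entry_in_path_arm_iff[OF that, of "j + 3"]
      by (cases "i = j") (auto simp: path_word_def path_letter_def simp del: upt_Suc)
  qed
  with admissible_path_arm[OF p j] show thesis
    using that by blast
qed

lemma bij_betw_path_word:
  "bij_betw (\<lambda>(A, H). path_word n A H) {(A, H). admissible n A H} (paths n)"
proof (rule bij_betw_imageI)
  show "inj_on (\<lambda>(A, H). path_word n A H) {(A, H). admissible n A H}"
  proof (rule inj_onI, clarsimp)
    fix A H A' H'
    assume "admissible n A H" "admissible n A' H'" "path_word n A H = path_word n A' H'"
    then show "A = A' \<and> H = H'"
      using path_word_inj by blast
  qed
  show "(\<lambda>(A, H). path_word n A H) ` {(A, H). admissible n A H} = paths n"
  proof (intro equalityI subsetI)
    fix ps assume "ps \<in> paths n"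
    then obtain A H where "admissible n A H" "ps = path_word n A H"
      by (rule paths_eq_path_word)
    then show "ps \<in> (\<lambda>(A, H). path_word n A H) ` {(A, H). admissible n A H}"
      by (intro image_eqI[of _ _ "(A, H)"]) simp_all
  qed (auto simp: path_word_in_paths)
qed

theorem mainTheorem2:
  fixes n :: nat
  shows "(\<forall>T \<in> SYT n. xi n T \<in> paths n) \<and> bij_betw (xi n) (SYT n) (paths n)"
proof -
  let ?arm_heart = "\<lambda>T. (T ` arm_cells n, T heart_cell)"
  have "bij_betw ((\<lambda>(A, H). path_word n A H) \<circ> ?arm_heart) (SYT n) (paths n)"
    using bij_betw_arm_heart bij_betw_path_word by (rule bij_betw_trans)
  moreover have "((\<lambda>(A, H). path_word n A H) \<circ> ?arm_heart) T = xi n T" if "T \<in> SYT n" for T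
    using xi_eq_path_word[OF that] by simp
  ultimately have "bij_betw (xi n) (SYT n) (paths n)"
    using bij_betw_cong by blast
  then show ?thesis
    using bij_betwE by blast
qed

end
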